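(* Let $0<d<\pi/2$ and let $\mathscr{D}_d=\{\zeta\in\mathbb{C}:|\Im\zeta|<d\}$, $\mathscr{D}_d^{-}=\{\zeta\in\mathscr{D}_d:\Re\zeta<0\}$, $\mathscr{D}_d^{+}=\{\zeta\in\mathscr{D}_d:\Re\zeta\ge 0\}$. Let $\psi(t)=\sinh t$. Assume $f$ is analytic on $\psi(\mathscr{D}_d)$ and there are constants $K,\alpha,\beta>0$ such that $|f(z)|\le K\,|1+z^2|^{-(\alpha+1)/2}$ for all $z\in\psi(\mathscr{D}_d^{-})$ and $|f(z)|\le K\,|1+z^2|^{-(\beta+1)/2}$ for all $z\in\psi(\mathscr{D}_d^{+})$. Let $\mu=\min\{\alpha,\beta\}$, $\nu=\max\{\alpha,\beta\}$, let $n$ be a positive integer, $h=\sqrt{2\pi d/(\mu n)}$, and let $M=n$, $N=\lceil \alpha n/\beta\rceil$ if $\mu=\alpha$, and $N=n$, $M=\lceil\beta n/\alpha\rceil$ if $\mu=\beta$. Then \[ \left|\int_{-\infty}^{\infty} f(t)\,dt-h\sum_{k=-M}^{N} f(\psi(kh))\psi'(kh)\right|\le C_1\,e^{-\sqrt{2\pi d\mu n}}, \qquad C_1=\frac{2^{\nu+1}K}{\mu}\left\{\frac{2}{(1-e^{-\sqrt{2\pi d\mu}})(\cos d)^{\nu}}+1\right\}. \]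
   Context: $\psi(\mathscr{D}_d)=\{\psi(\zeta):\zeta\in\mathscr{D}_d\}$ denotes the image of the strip; similarly for $\mathscr{D}_d^{\pm}$. Powers of complex quantities are taken as moduli, so all bounds are real. *)

theory Defs
  imports "HOL-Complex_Analysis.Complex_Analysis"
begin

definition strip :: "real \<Rightarrow> complex set" where
  "strip d = {z. \<bar>Im z\<bar> < d}"

definition strip_minus :: "real \<Rightarrow> complex set" where
  "strip_minus d = {z \<in> strip d. Re z < 0}"

definition strip_plus :: "real \<Rightarrow> complex set" where
  "strip_plus d = {z \<in> strip d. Re z \<ge> 0}"

end

theory Submission
  imports Defs "HOL-Real_Asymp.Real_Asymp"
begin

text \<open>Substituting \<open>t = sinh x\<close> turns the integral into one of \<open>F z = f (sinh z) * cosh z\<close>, which is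
  holomorphic on the strip \<open>\<bar>Im z\<bar> < d\<close>. Since \<open>1 + sinh\<^sup>2 z = cosh\<^sup>2 z\<close> and
  \<open>\<bar>cosh z\<bar> \<ge> e\<^bsup>\<bar>Re z\<bar>\<^esup> cos (Im z) / 2\<close>, the bounds on \<open>f\<close> make \<open>F\<close> decay like
  \<open>e\<^bsup>-\<alpha>\<bar>Re z\<bar>\<^esup>\<close> on the left and \<open>e\<^bsup>-\<beta>\<bar>Re z\<bar>\<^esup>\<close> on the right half of the strip.

  The trapezoidal error of \<open>F\<close> is a contour integral of \<open>F\<close> against the kernel
  \<open>(\<pi>/h) (cot (\<pi> z/h) - \<i>)\<close> around the rectangle with corners \<open>\<plusminus>(A + 1/2) h \<plusminus> \<i> \<delta>\<close>: the residues
  at the nodes \<open>k h\<close> produce the trapezoidal sum, the kernel is \<open>O(e\<^bsup>-2\<pi>\<delta>/h\<^esup>)\<close> on the lower edge,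
  and on the upper edge it differs by \<open>O(e\<^bsup>-2\<pi>\<delta>/h\<^esup>)\<close> from the constant \<open>-2\<pi>\<i>/h\<close>, whose
  contribution Cauchy's theorem moves back to the real integral. Letting \<open>A \<rightarrow> \<infinity>\<close> and \<open>\<delta> \<rightarrow> d\<close> bounds
  the discretisation error by \<open>O(e\<^bsup>-2\<pi>d/h\<^esup>)\<close>; truncating the sum at \<open>-M\<close> and \<open>N\<close> adds
  \<open>O(e\<^bsup>-\<alpha>Mh\<^esup> + e\<^bsup>-\<beta>Nh\<^esup>)\<close>, and the choice of \<open>h\<close>, \<open>M\<close>, \<open>N\<close> makes all three exponents
  at least \<open>\<surd>(2\<pi>d\<mu>n)\<close>.\<close>

section \<open>The cotangent kernel\<close>

lemma norm_cot_minus_i_le: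
  fixes u :: complex
  assumes "Im u < 0"
  shows "cmod (cot u - \<i>) \<le> 2 * exp (2 * Im u) / (1 - exp (2 * Im u))"
proof -
  define t where "t = - Im u"
  have t: "t > 0" using assms by (simp add: t_def)
  have sin_ge: "cmod (sin u) \<ge> (exp t - exp (-t)) / 2"
  proof -
    have "cmod (sin u) = cmod (exp (\<i> * u) - exp (-(\<i> * u))) / 2"
      by (simp add: sin_exp_eq norm_mult norm_divide)
    also have "\<dots> \<ge> (cmod (exp (\<i> * u)) - cmod (exp (-(\<i> * u)))) / 2"
      by (intro divide_right_mono norm_triangle_ineq2) auto
    finally show ?thesis by (simp add: t_def)
  qed
  have pos: "exp t - exp (-t) > 0" using t by simp
  then have "sin u \<noteq> 0" using sin_ge by auto
  then have "cot u - \<i> = exp (-(\<i> * u)) / sin u"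
    by (simp add: cot_def exp_minus_Euler field_simps)
  then have "cmod (cot u - \<i>) = exp (-t) / cmod (sin u)"
    by (simp add: norm_divide t_def)
  also have "\<dots> \<le> exp (-t) / ((exp t - exp (-t)) / 2)"
    using sin_ge pos by (intro divide_left_mono) (auto intro!: mult_pos_pos)
  also have "\<dots> = 2 * exp (-2*t) / (1 - exp (-2*t))"
  proof -
    have "exp (-2*t) = exp (-t) * exp (-t)" "exp t * exp (-t) = 1"
      by (simp_all flip: exp_add)
    moreover have "1 - exp (-2*t) > 0" using t by simp
    ultimately show ?thesis using pos by (simp add: field_simps)
  qed
  finally show ?thesis by (simp add: t_def)
qed

lemma norm_cot_plus_i_le:
  fixes u :: complex
  assumes "Im u > 0"
  shows "cmod (cot u + \<i>) \<le> 2 * exp (- 2 * Im u) / (1 - exp (- 2 * Im u))"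
proof -
  have "cot (-u) - \<i> = - (cot u + \<i>)"
    by (simp add: cot_def)
  then have "cmod (cot u + \<i>) = cmod (cot (-u) - \<i>)"
    by (metis norm_minus_cancel)
  then show ?thesis
    using norm_cot_minus_i_le[of "-u"] assms by simp
qed

lemma norm_sin_squared_eq_norm_cos_squared_plus_1:
  fixes u :: complex
  assumes "cos (Re u) = 0"
  shows "(cmod (sin u))^2 = (cmod (cos u))^2 + 1"
proof -
  have "cos (2 * Re u) = -1"
    using assms sin_cos_squared_add[of "Re u"] by (simp add: cos_double)
  moreover have "exp (2 * Im u) = exp (Im u) ^ 2"
    by (simp add: power2_eq_square flip: exp_add)
  ultimately show ?thesis
    unfolding norm_sin_squared norm_cos_squared using assms by (simp add: power2_eq_square field_simps)
qed

lemma norm_cot_le_1: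
  fixes u :: complex
  assumes "cos (Re u) = 0"
  shows "cmod (cot u) \<le> 1"
proof -
  have sin_cos: "(cmod (sin u))^2 = (cmod (cos u))^2 + 1"
    by (rule norm_sin_squared_eq_norm_cos_squared_plus_1[OF assms])
  then have "cmod (cos u) ^ 2 \<le> cmod (sin u) ^ 2"
    by simp
  then have "cmod (cos u) \<le> cmod (sin u)"
    by (rule power2_le_imp_le) simp
  moreover have "cmod (sin u) > 0"
  proof -
    have "cmod (sin u) ^ 2 > 0"
      unfolding sin_cos by (simp add: add_nonneg_pos)
    then show ?thesis
      by simp
  qed
  ultimately show ?thesis
    by (simp add: cot_def norm_divide divide_le_eq_1_pos)
qed

definition cot_kernel :: "real \<Rightarrow> complex \<Rightarrow> complex" where
  "cot_kernel h w = of_real (pi/h) * (cot (of_real (pi/h) * w) - \<i>)"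

lemma sin_pi_div_eq_0_iff:
  fixes w :: complex
  assumes "h > 0"
  shows "sin (of_real (pi/h) * w) = 0 \<longleftrightarrow> (\<exists>k::int. w = of_real (of_int k * h))"
proof -
  have "complex_of_real pi \<noteq> 0" "complex_of_real h \<noteq> 0"
    using assms by simp_all
  then have "of_real (pi/h) * w = of_real (of_int k * pi) \<longleftrightarrow> w = of_real (of_int k * h)" for k :: int
    by (auto simp: field_simps)
  then show ?thesis
    by (simp only: sin_eq_0)
qed

lemma holomorphic_on_cot_kernel:
  assumes "h > 0" and "\<And>w k. w \<in> S \<Longrightarrow> w \<noteq> of_real (of_int k * h)"
  shows "cot_kernel h holomorphic_on S"
proof -
  have "sin (of_real (pi/h) * w) \<noteq> 0" if "w \<in> S" for w
    using assms that sin_pi_div_eq_0_iff[OF assms(1), of w] by blast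
  then show ?thesis
    unfolding cot_kernel_def cot_def by (intro holomorphic_intros) auto
qed

lemma dist_nodes_ge:
  assumes "h > 0" "m \<noteq> k"
  shows "h \<le> dist (complex_of_real (of_int m * h)) (of_real (of_int k * h))"
proof -
  have "h \<le> \<bar>of_int m - of_int k\<bar> * h"
    using assms by (simp add: mult_le_cancel_right1 flip: of_int_diff)
  also have "\<dots> = dist (complex_of_real (of_int m * h)) (of_real (of_int k * h))"
    unfolding dist_of_real using assms(1) by (simp add: dist_real_def abs_mult flip: left_diff_distrib)
  finally show ?thesis .
qed

lemma cot_kernel_mult_tendsto_1:
  fixes k :: int
  assumes "h > 0"
  defines "p \<equiv> complex_of_real (of_int k * h)"
  shows "((\<lambda>w. cot_kernel h w * (w - p)) \<longlongrightarrow> 1) (at p)"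
proof -
  define a where "a = complex_of_real (pi/h)"
  have "a \<noteq> 0"
    using assms(1) by (simp add: a_def)
  have sin_p: "sin (a * p) = 0"
    unfolding a_def p_def using sin_pi_div_eq_0_iff[OF assms(1)] by blast
  then have "cos (a * p) \<noteq> 0"
    using sin_cos_squared_add[of "a * p"] by auto
  have "((\<lambda>w. sin (a * w)) has_field_derivative a * cos (a * p)) (at p)"
    by (auto intro!: derivative_eq_intros)
  then have "((\<lambda>w. sin (a * w) / (w - p)) \<longlongrightarrow> a * cos (a * p)) (at p)"
    using sin_p by (simp add: has_field_derivative_iff)
  then have "((\<lambda>w. a * cos (a * w) / (sin (a * w) / (w - p)) - a * \<i> * (w - p))
      \<longlongrightarrow> a * cos (a * p) / (a * cos (a * p)) - a * \<i> * (p - p)) (at p)"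
    by (intro tendsto_intros tendsto_ident_at) (use \<open>a \<noteq> 0\<close> \<open>cos (a * p) \<noteq> 0\<close> in auto)
  moreover have "a * cos (a * w) / (sin (a * w) / (w - p)) - a * \<i> * (w - p) = cot_kernel h w * (w - p)" for w
    unfolding cot_kernel_def cot_def a_def by (simp add: algebra_simps)
  ultimately show ?thesis
    using \<open>a \<noteq> 0\<close> \<open>cos (a * p) \<noteq> 0\<close> by simp
qed

lemma residue_cot_kernel:
  assumes "open S" "G holomorphic_on S" "h > 0" "of_real (of_int k * h) \<in> S"
  shows "residue (\<lambda>w. G w * cot_kernel h w) (of_real (of_int k * h)) = G (of_real (of_int k * h))"
proof (rule residue_simple')
  define p where "p = complex_of_real (of_int k * h)"
  show "open (S \<inter> ball p h)" "p \<in> S \<inter> ball p h"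
    using assms by (simp_all add: p_def open_Int)
  have "w \<noteq> of_real (of_int m * h)" if "w \<in> S \<inter> ball p h - {p}" for w m
    using that dist_nodes_ge[OF assms(3), of m k] by (auto simp: p_def dist_commute)
  then show "(\<lambda>w. G w * cot_kernel h w) holomorphic_on S \<inter> ball p h - {p}"
    using assms(2,3) holomorphic_on_cot_kernel[of h "S \<inter> ball p h - {p}"]
    by (intro holomorphic_intros) (auto elim: holomorphic_on_subset)
  have "isCont G p"
    using assms holomorphic_on_imp_continuous_on continuous_on_eq_continuous_at
    unfolding p_def by blast
  then have "((\<lambda>w. G w * (cot_kernel h w * (w - p))) \<longlongrightarrow> G p * 1) (at p)"
    using cot_kernel_mult_tendsto_1[OF assms(3), of k]
    by (intro tendsto_intros isCont_tendsto_compose[of p G] tendsto_ident_at) (auto simp: p_def)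
  then show "((\<lambda>w. G w * cot_kernel h w * (w - p)) \<longlongrightarrow> G p) (at p)"
    by (simp add: mult.assoc)
qed

lemma norm_cot_kernel_lower_le:
  assumes "h > 0" "\<delta> > 0" "Im w = -\<delta>"
  shows "cmod (cot_kernel h w) \<le> pi/h * (2 * exp (-2*pi*\<delta>/h) / (1 - exp (-2*pi*\<delta>/h)))"
proof -
  define u where "u = complex_of_real (pi/h) * w"
  have "Im u < 0" and Im_u: "2 * Im u = -2*pi*\<delta>/h"
    using assms by (simp_all add: u_def)
  have "cmod (cot_kernel h w) = pi/h * cmod (cot u - \<i>)"
    unfolding cot_kernel_def u_def[symmetric] norm_mult norm_of_real using assms(1) by simp
  also have "\<dots> \<le> pi/h * (2 * exp (-2*pi*\<delta>/h) / (1 - exp (-2*pi*\<delta>/h)))"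
    using norm_cot_minus_i_le[OF \<open>Im u < 0\<close>] assms(1) unfolding Im_u by (intro mult_left_mono) auto
  finally show ?thesis .
qed

lemma norm_cot_kernel_upper_le:
  assumes "h > 0" "\<delta> > 0" "Im w = \<delta>"
  shows "cmod (cot_kernel h w + 2 * \<i> * of_real (pi/h))
           \<le> pi/h * (2 * exp (-2*pi*\<delta>/h) / (1 - exp (-2*pi*\<delta>/h)))"
proof -
  define u where "u = complex_of_real (pi/h) * w"
  have "Im u > 0" and Im_u: "- 2 * Im u = -2*pi*\<delta>/h"
    using assms by (simp_all add: u_def)
  have "cot_kernel h w + 2 * \<i> * of_real (pi/h) = of_real (pi/h) * (cot u + \<i>)"
    by (simp add: cot_kernel_def u_def algebra_simps)
  then have "cmod (cot_kernel h w + 2 * \<i> * of_real (pi/h)) = pi/h * cmod (cot u + \<i>)"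
    using assms(1) by (simp only: norm_mult norm_of_real) simp
  also have "\<dots> \<le> pi/h * (2 * exp (-2*pi*\<delta>/h) / (1 - exp (-2*pi*\<delta>/h)))"
    using norm_cot_plus_i_le[OF \<open>Im u > 0\<close>] assms(1) unfolding Im_u by (intro mult_left_mono) auto
  finally show ?thesis .
qed

lemma norm_cot_kernel_vertical_le:
  assumes "h > 0" "\<bar>Re w\<bar> = (real A + 1/2) * h"
  shows "cmod (cot_kernel h w) \<le> 2 * pi / h"
proof -
  define u where "u = complex_of_real (pi/h) * w"
  have "\<bar>Re u\<bar> = (real A + 1/2) * pi"
    using assms by (simp add: u_def abs_mult)
  then have "Re u = of_int (2 * int A + 1) * (pi/2) \<or> Re u = of_int (-(2 * int A + 1)) * (pi/2)"
    by (cases "Re u \<ge> 0") (simp_all add: algebra_simps)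
  moreover have "odd (2 * int A + 1)" "odd (-(2 * int A + 1))"
    by simp_all
  ultimately have "cos (Re u) = 0"
    unfolding cos_zero_iff_int by blast
  have "cmod (cot_kernel h w) = pi/h * cmod (cot u - \<i>)"
    unfolding cot_kernel_def u_def[symmetric] norm_mult norm_of_real using assms(1) by simp
  also have "\<dots> \<le> pi/h * 2"
    using norm_cot_le_1[OF \<open>cos (Re u) = 0\<close>] norm_triangle_ineq4[of "cot u" \<i>] assms(1)
    by (intro mult_left_mono) auto
  finally show ?thesis
    by (simp add: mult.commute)
qed

section \<open>Contour integrals over rectangles\<close>

lemma norm_contour_integral_linepath_le:
  assumes "0 \<le> B" "\<And>w. w \<in> closed_segment a b \<Longrightarrow> cmod (f w) \<le> B"
  shows "cmod (contour_integral (linepath a b) f) \<le> B * cmod (b - a)"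
  using assms contour_integral_bound_linepath[of f a b B]
  by (cases "f contour_integrable_on linepath a b") (auto simp: not_integrable_contour_integral)

lemma exp_neg_abs_integrable_on_interval:
  fixes \<mu> a b :: real
  shows "(\<lambda>x. exp (-\<mu> * \<bar>x\<bar>)) integrable_on {a..b}"
  by (intro integrable_continuous_interval continuous_intros)

lemma integral_exp_neg_abs_le:
  fixes \<mu> X :: real
  assumes "\<mu> > 0" "X \<ge> 0"
  shows "integral {-X..X} (\<lambda>x. exp (-\<mu> * \<bar>x\<bar>)) \<le> 2 / \<mu>"
proof -
  have "((\<lambda>x. exp (-\<mu> * x)) has_integral (-exp (-\<mu> * X) / \<mu> - (-exp (-\<mu> * 0) / \<mu>))) {0..X}"
    using assms
    by (intro fundamental_theorem_of_calculus)
       (auto intro!: derivative_eq_intros simp flip: has_real_derivative_iff_has_vector_derivative)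
  then have "integral {0..X} (\<lambda>x. exp (-\<mu> * x)) = (1 - exp (-\<mu> * X)) / \<mu>"
    by (simp add: integral_unique diff_divide_distrib)
  moreover have "integral {0..X} (\<lambda>x. exp (-\<mu> * \<bar>x\<bar>)) = integral {0..X} (\<lambda>x. exp (-\<mu> * x))"
    by (intro integral_cong) auto
  moreover have "integral {-X..0} (\<lambda>x. exp (-\<mu> * \<bar>x\<bar>)) = integral {0..X} (\<lambda>x. exp (-\<mu> * \<bar>x\<bar>))"
    using Henstock_Kurzweil_Integration.integral_reflect_real[of X 0 "\<lambda>x. exp (-\<mu> * \<bar>x\<bar>)"] by simp
  moreover have "integral {-X..X} (\<lambda>x. exp (-\<mu> * \<bar>x\<bar>))
      = integral {-X..0} (\<lambda>x. exp (-\<mu> * \<bar>x\<bar>)) + integral {0..X} (\<lambda>x. exp (-\<mu> * \<bar>x\<bar>))"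
    using Henstock_Kurzweil_Integration.integral_combine[OF _ _ exp_neg_abs_integrable_on_interval, of "-X" 0 X] assms by simp
  ultimately show ?thesis
    using assms by (simp add: divide_right_mono)
qed

lemma norm_contour_integral_horizontal_le:
  fixes g :: "complex \<Rightarrow> complex"
  assumes "X \<ge> 0" "\<mu> > 0" "C \<ge> 0"
    and bound: "\<And>x. -X \<le> x \<Longrightarrow> x \<le> X \<Longrightarrow> cmod (g (Complex x y)) \<le> C * exp (-\<mu> * \<bar>x\<bar>)"
  shows "cmod (contour_integral (linepath (Complex (-X) y) (Complex X y)) g) \<le> 2 * C / \<mu>"
proof (cases "X = 0")
  case True
  then show ?thesis using assms by simp
next
  case False
  have "linepath (Complex (-X) y) (Complex X y) = (+) (Complex 0 y) \<circ> linepath (of_real (-X)) (of_real X)"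
    by (auto simp: linepath_def fun_eq_iff complex_eq_iff algebra_simps)
  then have "contour_integral (linepath (Complex (-X) y) (Complex X y)) g
      = integral {-X..X} (\<lambda>x. g (of_real x + Complex 0 y))"
    using assms(1) False by (simp add: contour_integral_translate contour_integral_linepath_Reals_eq)
  also have "\<dots> = integral {-X..X} (\<lambda>x. g (Complex x y))"
    by (simp add: Complex_eq)
  finally have eq: "contour_integral (linepath (Complex (-X) y) (Complex X y)) g
      = integral {-X..X} (\<lambda>x. g (Complex x y))" .
  have "cmod (integral {-X..X} (\<lambda>x. g (Complex x y))) \<le> integral {-X..X} (\<lambda>x. C * exp (-\<mu> * \<bar>x\<bar>))"
  proof (cases "(\<lambda>x. g (Complex x y)) integrable_on {-X..X}")
    case True
    then show ?thesis
      using bound by (intro integral_norm_bound_integral integrable_on_mult_right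
          exp_neg_abs_integrable_on_interval) auto
  next
    case False
    then show ?thesis
      using assms(3) integral_nonneg[OF exp_neg_abs_integrable_on_interval, of "-X" X \<mu>]
      by (simp add: not_integrable_integral)
  qed
  also have "\<dots> = C * integral {-X..X} (\<lambda>x. exp (-\<mu> * \<bar>x\<bar>))"
    by simp
  also have "\<dots> \<le> C * (2 / \<mu>)"
    using integral_exp_neg_abs_le[OF assms(2,1)] assms(3) by (intro mult_left_mono) auto
  finally show ?thesis
    using eq by (simp add: mult.commute)
qed

lemma norm_contour_integral_vertical_le:
  assumes "0 \<le> V" "\<bar>y1\<bar> \<le> \<delta>" "\<bar>y2\<bar> \<le> \<delta>" "\<And>y. \<bar>y\<bar> \<le> \<delta> \<Longrightarrow> cmod (F (Complex x y)) \<le> V"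
  shows "cmod (contour_integral (linepath (Complex x y1) (Complex x y2)) F) \<le> V * \<bar>y2 - y1\<bar>"
proof -
  have "cmod (F w) \<le> V" if "w \<in> closed_segment (Complex x y1) (Complex x y2)" for w
  proof -
    have "w = Complex x (Im w)" "Im w \<in> closed_segment y1 y2"
      using that by (auto simp: closed_segment_same_Re complex_eq_iff)
    moreover from this(2) have "\<bar>Im w\<bar> \<le> \<delta>"
      using assms(2,3) by (auto simp: closed_segment_eq_real_ivl split: if_splits)
    ultimately show ?thesis
      using assms(4) by metis
  qed
  then have "cmod (contour_integral (linepath (Complex x y1) (Complex x y2)) F)
      \<le> V * cmod (Complex x y2 - Complex x y1)"
    using assms(1) by (rule norm_contour_integral_linepath_le[rotated])
  also have "cmod (Complex x y2 - Complex x y1) = \<bar>y2 - y1\<bar>"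
    by (simp add: cmod_def)
  finally show ?thesis .
qed

lemma contour_integral_rectpath:
  assumes "continuous_on (path_image (rectpath a1 a3)) f"
  defines "a2 \<equiv> Complex (Re a3) (Im a1)" and "a4 \<equiv> Complex (Re a1) (Im a3)"
  shows "contour_integral (rectpath a1 a3) f
           = contour_integral (linepath a1 a2) f + contour_integral (linepath a2 a3) f
             + contour_integral (linepath a3 a4) f + contour_integral (linepath a4 a1) f"
proof -
  have rect: "rectpath a1 a3 = linepath a1 a2 +++ linepath a2 a3 +++ linepath a3 a4 +++ linepath a4 a1"
    by (simp add: rectpath_def Let_def a2_def a4_def)
  have integrable: "f contour_integrable_on linepath a b"
    if "closed_segment a b \<subseteq> path_image (rectpath a1 a3)" for a b
    using contour_integrable_continuous_linepath continuous_on_subset[OF assms(1) that] by blast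
  have "f contour_integrable_on linepath a1 a2" "f contour_integrable_on linepath a2 a3"
    "f contour_integrable_on linepath a3 a4" "f contour_integrable_on linepath a4 a1"
    by (auto intro!: integrable simp: rect path_image_join)
  then show ?thesis
    unfolding rect by (simp add: contour_integrable_joinI add.assoc)
qed

lemma node_in_box:
  assumes "h > 0" "0 < \<delta>" "\<bar>k\<bar> \<le> int A"
  shows "complex_of_real (of_int k * h)
           \<in> box (Complex (-((real A + 1/2) * h)) (-\<delta>)) (Complex ((real A + 1/2) * h) \<delta>)"
proof -
  have "\<bar>of_int k\<bar> * h \<le> real A * h"
    using assms by (intro mult_right_mono) linarith+
  moreover have "real A * h < (real A + 1/2) * h"
    using assms(1) by (simp add: distrib_right)
  ultimately have "\<bar>of_int k * h\<bar> < (real A + 1/2) * h"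
    using assms(1) by (simp add: abs_mult)
  then show ?thesis
    using assms(2) by (auto simp: in_box_complex_iff abs_less_iff)
qed

lemma rectpath_avoids_nodes:
  assumes "h > 0" "\<delta> > 0" "X = (real A + 1/2) * h"
    and "w \<in> path_image (rectpath (Complex (-X) (-\<delta>)) (Complex X \<delta>))"
  shows "w \<noteq> of_real (of_int k * h)"
proof
  assume w: "w = of_real (of_int k * h)"
  have "\<bar>of_int k * h\<bar> \<le> X"
    using assms w by (auto simp: path_image_rectpath_cbox_minus_box in_cbox_complex_iff abs_le_iff)
  then have "\<bar>of_int k\<bar> < real A + 1"
    using assms(1,3) by (simp add: abs_mult)
  then have "\<bar>k\<bar> \<le> int A"
    by linarith
  then have "w \<in> box (Complex (-X) (-\<delta>)) (Complex X \<delta>)"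
    using node_in_box[OF assms(1,2)] w assms(3) by simp
  then show False
    using assms by (simp add: path_image_rectpath_cbox_minus_box)
qed

lemma contour_integral_rectpath_cot_kernel:
  fixes G :: "complex \<Rightarrow> complex"
  assumes holo: "G holomorphic_on {z. \<bar>Im z\<bar> < d}"
    and "0 < \<delta>" "\<delta> < d" "0 < h" and X_def: "X = (real A + 1/2) * h"
  shows "contour_integral (rectpath (Complex (-X) (-\<delta>)) (Complex X \<delta>)) (\<lambda>w. G w * cot_kernel h w)
           = 2 * pi * \<i> * (\<Sum>k=-int A..int A. G (of_real (of_int k * h)))"
proof -
  define P1 P3 where "P1 = Complex (-X) (-\<delta>)" and "P3 = Complex X \<delta>"
  define S where "S = box (Complex (-(X + h/2)) (-d)) (Complex (X + h/2) d)"
  define N where "N = (\<lambda>k. complex_of_real (of_int k * h)) ` {-int A..int A}"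
  have ordered: "Re P1 \<le> Re P3" "Im P1 \<le> Im P3"
    using assms by (auto simp: P1_def P3_def)
  have box_S: "cbox P1 P3 \<subseteq> S"
    using assms by (auto simp: S_def P1_def P3_def in_cbox_complex_iff in_box_complex_iff)
  have N_box: "N \<subseteq> box P1 P3"
    using node_in_box[OF assms(4,2)] X_def by (auto simp: N_def P1_def P3_def)
  have node_in_N: "w \<in> N" if "w \<in> S" "w = of_real (of_int k * h)" for w k
  proof -
    have "\<bar>of_int k\<bar> * h < (real A + 1) * h"
      using that assms(4) X_def by (auto simp: S_def in_box_complex_iff abs_mult algebra_simps)
    then have "\<bar>k\<bar> \<le> int A"
      using assms(4) by (simp add: mult_less_cancel_right)
    then show ?thesis
      unfolding N_def that(2) by (intro imageI) auto
  qed
  have holo_S: "G holomorphic_on S"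
    using holo by (rule holomorphic_on_subset) (auto simp: S_def in_box_complex_iff)
  moreover have "cot_kernel h holomorphic_on S - N"
    using node_in_N assms(4) by (intro holomorphic_on_cot_kernel) auto
  ultimately have "(\<lambda>w. G w * cot_kernel h w) holomorphic_on S - N"
    by (auto intro: holomorphic_intros holomorphic_on_subset)
  moreover have "path_image (rectpath P1 P3) \<subseteq> S - N"
    using rectpath_avoids_nodes[OF assms(4,2) X_def] box_S path_image_rectpath_subset_cbox[OF ordered]
    by (auto simp: N_def P1_def P3_def)
  ultimately have "contour_integral (rectpath P1 P3) (\<lambda>w. G w * cot_kernel h w)
      = 2 * pi * \<i> * (\<Sum>p\<in>N. winding_number (rectpath P1 P3) p * residue (\<lambda>w. G w * cot_kernel h w) p)"
    using box_S winding_number_rectpath_outside[OF ordered]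
    by (intro Residue_theorem[of S]) (auto simp: S_def N_def convex_connected)
  also have "\<dots> = 2 * pi * \<i> * (\<Sum>p\<in>N. G p)"
  proof (intro arg_cong[where f="(*) _"] sum.cong refl)
    fix p assume "p \<in> N"
    then obtain k where k: "p = of_real (of_int k * h)"
      by (auto simp: N_def)
    have "p \<in> box P1 P3"
      using N_box \<open>p \<in> N\<close> by blast
    moreover from this have "residue (\<lambda>w. G w * cot_kernel h w) p = G p"
      using box_S box_subset_cbox unfolding k
      by (intro residue_cot_kernel[OF _ holo_S assms(4)]) (auto simp: S_def open_box)
    ultimately show "winding_number (rectpath P1 P3) p * residue (\<lambda>w. G w * cot_kernel h w) p = G p"
      using winding_number_rectpath by simp
  qed
  also have "(\<Sum>p\<in>N. G p) = (\<Sum>k=-int A..int A. G (of_real (of_int k * h)))"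
    unfolding N_def using assms(4) by (subst sum.reindex) (auto simp: inj_on_def)
  finally show ?thesis
    by (simp add: P1_def P3_def)
qed

lemma integral_eq_contour_integral_upper:
  fixes G :: "complex \<Rightarrow> complex"
  assumes holo: "G holomorphic_on cbox (Complex (-X) 0) (Complex X \<delta>)" and "0 < X" "0 \<le> \<delta>"
  shows "integral {-X..X} (\<lambda>x. G (of_real x))
           = contour_integral (linepath (Complex (-X) \<delta>) (Complex X \<delta>)) G
             - contour_integral (linepath (Complex X 0) (Complex X \<delta>)) G
             - contour_integral (linepath (Complex (-X) \<delta>) (Complex (-X) 0)) G"
proof -
  define Q1 Q2 P3 P4 where "Q1 = Complex (-X) 0" and "Q2 = Complex X 0"
    and "P3 = Complex X \<delta>" and "P4 = Complex (-X) \<delta>"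
  have image: "path_image (rectpath Q1 P3) \<subseteq> cbox Q1 P3"
    using assms by (intro path_image_rectpath_subset_cbox) (auto simp: Q1_def P3_def)
  have cont: "continuous_on (cbox Q1 P3) G"
    using holo holomorphic_on_imp_continuous_on by (simp add: Q1_def P3_def)
  have "closed_segment P3 P4 \<subseteq> path_image (rectpath Q1 P3)"
    by (auto simp: rectpath_def Let_def path_image_join Q1_def P3_def P4_def)
  then have "contour_integral (linepath P3 P4) G = - contour_integral (linepath P4 P3) G"
    using cont image by (intro contour_integral_reverse_linepath continuous_on_subset[OF cont]) auto
  moreover have "contour_integral (rectpath Q1 P3) G = 0"
    using holo image by (intro contour_integral_unique Cauchy_theorem_convex_simple) (auto simp: Q1_def P3_def)
  moreover have "Complex (Re P3) (Im Q1) = Q2" "Complex (Re Q1) (Im P3) = P4"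
    by (simp_all add: Q1_def Q2_def P3_def P4_def)
  moreover have "contour_integral (linepath Q1 Q2) G = integral {-X..X} (\<lambda>x. G (of_real x))"
    using assms(2) by (simp add: contour_integral_linepath_Reals_eq Q1_def Q2_def complex_is_Real_iff)
  ultimately show ?thesis
    using contour_integral_rectpath[OF continuous_on_subset[OF cont image]]
    by (simp add: Q1_def Q2_def P3_def P4_def algebra_simps)
qed

lemma trapezoid_sum_minus_integral_eq:
  fixes G :: "complex \<Rightarrow> complex"
  assumes holo: "G holomorphic_on {z. \<bar>Im z\<bar> < d}"
    and "0 < \<delta>" "\<delta> < d" "0 < h" and X_def: "X = (real A + 1/2) * h"
  defines "\<Phi> \<equiv> \<lambda>w. G w * cot_kernel h w"
    and "\<Psi> \<equiv> \<lambda>w. G w * (cot_kernel h w + 2 * \<i> * of_real (pi/h))"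
  shows "of_real h * (\<Sum>k=-int A..int A. G (of_real (of_int k * h))) - integral {-X..X} (\<lambda>x. G (of_real x))
     = of_real h / (2 * pi * \<i>) *
         (contour_integral (linepath (Complex (-X) (-\<delta>)) (Complex X (-\<delta>))) \<Phi>
          + contour_integral (linepath (Complex X (-\<delta>)) (Complex X \<delta>)) \<Phi>
          - contour_integral (linepath (Complex (-X) \<delta>) (Complex X \<delta>)) \<Psi>
          + contour_integral (linepath (Complex (-X) \<delta>) (Complex (-X) (-\<delta>))) \<Phi>)
       + contour_integral (linepath (Complex X 0) (Complex X \<delta>)) G
       + contour_integral (linepath (Complex (-X) \<delta>) (Complex (-X) 0)) G"
proof -
  define P1 P2 P3 P4 where "P1 = Complex (-X) (-\<delta>)" and "P2 = Complex X (-\<delta>)"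
    and "P3 = Complex X \<delta>" and "P4 = Complex (-X) \<delta>"
  define c where "c = 2 * \<i> * complex_of_real (pi/h)"
  define s where "s = (\<Sum>k=-int A..int A. G (of_real (of_int k * h)))"
  have holo_box: "G holomorphic_on cbox P1 P3"
    using assms by (intro holomorphic_on_subset[OF holo]) (auto simp: P1_def P3_def in_cbox_complex_iff)
  then have cont_G: "continuous_on (cbox P1 P3) G"
    by (rule holomorphic_on_imp_continuous_on)
  have image: "path_image (rectpath P1 P3) \<subseteq> cbox P1 P3"
    using assms by (intro path_image_rectpath_subset_cbox) (auto simp: P1_def P3_def)
  have "cot_kernel h holomorphic_on path_image (rectpath P1 P3)"
    using rectpath_avoids_nodes[OF assms(4,2) X_def] by (intro holomorphic_on_cot_kernel)
      (auto simp: P1_def P3_def assms)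
  then have cont_\<Phi>: "continuous_on (path_image (rectpath P1 P3)) \<Phi>"
    unfolding \<Phi>_def
    by (intro continuous_on_mult continuous_on_subset[OF cont_G image] holomorphic_on_imp_continuous_on)
  have top: "closed_segment P3 P4 \<subseteq> path_image (rectpath P1 P3)"
    by (auto simp: rectpath_def Let_def path_image_join P1_def P3_def P4_def)
  have "Complex (Re P3) (Im P1) = P2" "Complex (Re P1) (Im P3) = P4"
    by (simp_all add: P1_def P2_def P3_def P4_def)
  moreover have "contour_integral (linepath P3 P4) \<Phi> = - contour_integral (linepath P4 P3) \<Phi>"
    by (rule contour_integral_reverse_linepath[OF continuous_on_subset[OF cont_\<Phi> top]])
  moreover have "contour_integral (rectpath P1 P3) \<Phi> = 2 * pi * \<i> * s"
    using contour_integral_rectpath_cot_kernel[OF holo assms(2-4) X_def]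
    by (simp only: P1_def P3_def s_def \<Phi>_def)
  ultimately have residues: "contour_integral (linepath P1 P2) \<Phi> + contour_integral (linepath P2 P3) \<Phi>
      - contour_integral (linepath P4 P3) \<Phi> + contour_integral (linepath P4 P1) \<Phi> = 2 * pi * \<i> * s"
    using contour_integral_rectpath[OF cont_\<Phi>] by simp
  have cauchy: "integral {-X..X} (\<lambda>x. G (of_real x)) = contour_integral (linepath P4 P3) G
      - contour_integral (linepath (Complex X 0) P3) G - contour_integral (linepath P4 (Complex (-X) 0)) G"
    unfolding P3_def P4_def using assms
    by (intro integral_eq_contour_integral_upper holomorphic_on_subset[OF holo_box])
      (auto simp: P1_def P3_def in_cbox_complex_iff)
  have "closed_segment P4 P3 \<subseteq> cbox P1 P3"
    using top image by (auto simp: closed_segment_commute)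
  then have "(\<Phi> has_contour_integral contour_integral (linepath P4 P3) \<Phi>) (linepath P4 P3)"
    "(G has_contour_integral contour_integral (linepath P4 P3) G) (linepath P4 P3)"
    using continuous_on_subset[OF cont_\<Phi> top] continuous_on_subset[OF cont_G]
    by (auto intro!: has_contour_integral_integral contour_integrable_continuous_linepath
        simp: closed_segment_commute)
  then have "((\<lambda>w. \<Phi> w + c * G w) has_contour_integral
      contour_integral (linepath P4 P3) \<Phi> + c * contour_integral (linepath P4 P3) G) (linepath P4 P3)"
    by (intro has_contour_integral_add has_contour_integral_lmul)
  moreover have "(\<lambda>w. \<Phi> w + c * G w) = \<Psi>"
    by (auto simp: \<Phi>_def \<Psi>_def c_def algebra_simps)
  ultimately have "contour_integral (linepath P4 P3) \<Psi>
      = contour_integral (linepath P4 P3) \<Phi> + c * contour_integral (linepath P4 P3) G"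
    by (simp add: contour_integral_unique)
  moreover have "of_real h / (2 * pi * \<i>) * c = 1"
    using assms(4) by (simp add: c_def field_simps)
  moreover have "of_real h / (2 * pi * \<i>) * (2 * pi * \<i>) = of_real h"
    by simp
  ultimately show ?thesis
    using residues cauchy
    unfolding P1_def[symmetric] P2_def[symmetric] P3_def[symmetric] P4_def[symmetric] s_def[symmetric]
    by algebra
qed

lemma norm_contour_integral_lower_edge_le:
  assumes "0 \<le> X" "0 < \<delta>" "0 < h" "0 < \<mu>" "0 \<le> B"
    and bound: "\<And>x. cmod (G (Complex x (-\<delta>))) \<le> B * exp (-\<mu> * \<bar>x\<bar>)"
  shows "cmod (contour_integral (linepath (Complex (-X) (-\<delta>)) (Complex X (-\<delta>))) (\<lambda>w. G w * cot_kernel h w))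
           \<le> 4 * pi / h * exp (-2*pi*\<delta>/h) / (1 - exp (-2*pi*\<delta>/h)) * B / \<mu>"
proof -
  define C where "C = pi/h * (2 * exp (-2*pi*\<delta>/h) / (1 - exp (-2*pi*\<delta>/h))) * B"
  have "cmod (contour_integral (linepath (Complex (-X) (-\<delta>)) (Complex X (-\<delta>))) (\<lambda>w. G w * cot_kernel h w))
      \<le> 2 * C / \<mu>"
  proof (rule norm_contour_integral_horizontal_le[OF assms(1,4)])
    show "0 \<le> C"
      using assms by (simp add: C_def)
    fix x
    have "cmod (G (Complex x (-\<delta>)) * cot_kernel h (Complex x (-\<delta>)))
        \<le> B * exp (-\<mu> * \<bar>x\<bar>) * (pi/h * (2 * exp (-2*pi*\<delta>/h) / (1 - exp (-2*pi*\<delta>/h))))"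
      unfolding norm_mult using assms bound[of x] by (intro mult_mono norm_cot_kernel_lower_le) auto
    then show "cmod (G (Complex x (-\<delta>)) * cot_kernel h (Complex x (-\<delta>))) \<le> C * exp (-\<mu> * \<bar>x\<bar>)"
      by (simp add: C_def ac_simps)
  qed
  then show ?thesis
    by (simp add: C_def)
qed

lemma norm_contour_integral_upper_edge_le:
  assumes "0 \<le> X" "0 < \<delta>" "0 < h" "0 < \<mu>" "0 \<le> B"
    and bound: "\<And>x. cmod (G (Complex x \<delta>)) \<le> B * exp (-\<mu> * \<bar>x\<bar>)"
  shows "cmod (contour_integral (linepath (Complex (-X) \<delta>) (Complex X \<delta>))
             (\<lambda>w. G w * (cot_kernel h w + 2 * \<i> * of_real (pi/h))))
           \<le> 4 * pi / h * exp (-2*pi*\<delta>/h) / (1 - exp (-2*pi*\<delta>/h)) * B / \<mu>"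
proof -
  define C where "C = pi/h * (2 * exp (-2*pi*\<delta>/h) / (1 - exp (-2*pi*\<delta>/h))) * B"
  have "cmod (contour_integral (linepath (Complex (-X) \<delta>) (Complex X \<delta>))
      (\<lambda>w. G w * (cot_kernel h w + 2 * \<i> * of_real (pi/h)))) \<le> 2 * C / \<mu>"
  proof (rule norm_contour_integral_horizontal_le[OF assms(1,4)])
    show "0 \<le> C"
      using assms by (simp add: C_def)
    fix x
    have "cmod (G (Complex x \<delta>) * (cot_kernel h (Complex x \<delta>) + 2 * \<i> * of_real (pi/h)))
        \<le> B * exp (-\<mu> * \<bar>x\<bar>) * (pi/h * (2 * exp (-2*pi*\<delta>/h) / (1 - exp (-2*pi*\<delta>/h))))"
      unfolding norm_mult using assms bound[of x] by (intro mult_mono norm_cot_kernel_upper_le) auto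
    then show "cmod (G (Complex x \<delta>) * (cot_kernel h (Complex x \<delta>) + 2 * \<i> * of_real (pi/h)))
        \<le> C * exp (-\<mu> * \<bar>x\<bar>)"
      by (simp add: C_def ac_simps)
  qed
  then show ?thesis
    by (simp add: C_def)
qed

lemma norm_trapezoid_sum_minus_integral_le:
  fixes G :: "complex \<Rightarrow> complex"
  assumes holo: "G holomorphic_on {z. \<bar>Im z\<bar> < d}"
    and "0 < \<delta>" "\<delta> < d" "0 < h" "0 < \<mu>" "0 \<le> B"
    and bound: "\<And>z. \<bar>Im z\<bar> \<le> \<delta> \<Longrightarrow> cmod (G z) \<le> B * exp (-\<mu> * \<bar>Re z\<bar>)"
    and X_def: "X = (real A + 1/2) * h"
  shows "cmod (of_real h * (\<Sum>k=-int A..int A. G (of_real (of_int k * h))) - integral {-X..X} (\<lambda>x. G (of_real x)))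
         \<le> 4 * exp (-2*pi*\<delta>/h) / (1 - exp (-2*pi*\<delta>/h)) * B / \<mu> + 6 * \<delta> * B * exp (-\<mu> * X)"
proof -
  define E where "E = 4 * pi / h * exp (-2*pi*\<delta>/h) / (1 - exp (-2*pi*\<delta>/h)) * B / \<mu>"
  define W where "W = B * exp (-\<mu> * X)"
  define \<Phi> where "\<Phi> = (\<lambda>w. G w * cot_kernel h w)"
  have "0 \<le> X" "0 \<le> W"
    using assms by (simp_all add: W_def)
  have strip_bound: "cmod (G (Complex x y)) \<le> B * exp (-\<mu> * \<bar>x\<bar>)" if "\<bar>y\<bar> \<le> \<delta>" for x y
    using bound[of "Complex x y"] that by simp
  have lower: "cmod (contour_integral (linepath (Complex (-X) (-\<delta>)) (Complex X (-\<delta>))) \<Phi>) \<le> E"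
    unfolding \<Phi>_def E_def using \<open>0 \<le> X\<close> assms strip_bound
    by (intro norm_contour_integral_lower_edge_le) auto
  have upper: "cmod (contour_integral (linepath (Complex (-X) \<delta>) (Complex X \<delta>))
      (\<lambda>w. G w * (cot_kernel h w + 2 * \<i> * of_real (pi/h)))) \<le> E"
    unfolding E_def using \<open>0 \<le> X\<close> assms strip_bound
    by (intro norm_contour_integral_upper_edge_le) auto
  have G_side: "cmod (G (Complex x y)) \<le> W" if "\<bar>x\<bar> = X" "\<bar>y\<bar> \<le> \<delta>" for x y
    using strip_bound[OF that(2), of x] that(1) by (simp add: W_def)
  have \<Phi>_side: "cmod (\<Phi> (Complex x y)) \<le> W * (2 * pi / h)" if "\<bar>x\<bar> = X" "\<bar>y\<bar> \<le> \<delta>" for x y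
    unfolding \<Phi>_def norm_mult using G_side[OF that] norm_cot_kernel_vertical_le[OF assms(4), of "Complex x y" A]
      that(1) X_def \<open>0 \<le> W\<close>
    by (intro mult_mono) auto
  have "cmod (contour_integral (linepath (Complex X (-\<delta>)) (Complex X \<delta>)) \<Phi>) \<le> W * (2 * pi / h) * \<bar>\<delta> - -\<delta>\<bar>"
    "cmod (contour_integral (linepath (Complex (-X) \<delta>) (Complex (-X) (-\<delta>))) \<Phi>) \<le> W * (2 * pi / h) * \<bar>-\<delta> - \<delta>\<bar>"
    using \<Phi>_side \<open>0 \<le> X\<close> \<open>0 \<le> W\<close> assms(2,4) by (intro norm_contour_integral_vertical_le[where \<delta> = \<delta>]; simp)+
  moreover have "cmod (contour_integral (linepath (Complex X 0) (Complex X \<delta>)) G) \<le> W * \<bar>\<delta> - 0\<bar>"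
    "cmod (contour_integral (linepath (Complex (-X) \<delta>) (Complex (-X) 0)) G) \<le> W * \<bar>0 - \<delta>\<bar>"
    using G_side \<open>0 \<le> X\<close> \<open>0 \<le> W\<close> assms(2) by (intro norm_contour_integral_vertical_le[where \<delta> = \<delta>]; simp)+
  ultimately have sides:
    "cmod (contour_integral (linepath (Complex X (-\<delta>)) (Complex X \<delta>)) \<Phi>) \<le> W * (2 * pi / h) * (2 * \<delta>)"
    "cmod (contour_integral (linepath (Complex (-X) \<delta>) (Complex (-X) (-\<delta>))) \<Phi>) \<le> W * (2 * pi / h) * (2 * \<delta>)"
    "cmod (contour_integral (linepath (Complex X 0) (Complex X \<delta>)) G) \<le> W * \<delta>"
    "cmod (contour_integral (linepath (Complex (-X) \<delta>) (Complex (-X) 0)) G) \<le> W * \<delta>"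
    using assms(2) by simp_all
  have triangle: "cmod (D * (a + b - c + e) + f + g)
      \<le> cmod D * (cmod a + cmod b + cmod c + cmod e) + cmod f + cmod g" for D a b c e f g :: complex
  proof -
    have "cmod (a + b - c + e) \<le> cmod a + cmod b + cmod c + cmod e"
      using norm_triangle_ineq[of "a + b - c" e] norm_triangle_ineq4[of "a + b" c] norm_triangle_ineq[of a b]
      by linarith
    then have "cmod (D * (a + b - c + e)) \<le> cmod D * (cmod a + cmod b + cmod c + cmod e)"
      unfolding norm_mult by (rule mult_left_mono) simp
    then show ?thesis
      using norm_triangle_ineq[of "D * (a + b - c + e) + f" g] norm_triangle_ineq[of "D * (a + b - c + e)" f]
      by linarith
  qed
  have "cmod (of_real h * (\<Sum>k=-int A..int A. G (of_real (of_int k * h))) - integral {-X..X} (\<lambda>x. G (of_real x)))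
      \<le> h / (2 * pi) * (E + W * (2 * pi / h) * (2 * \<delta>) + E + W * (2 * pi / h) * (2 * \<delta>)) + W * \<delta> + W * \<delta>"
    unfolding trapezoid_sum_minus_integral_eq[OF holo assms(2-4) X_def] \<Phi>_def[symmetric]
    using assms(4) lower upper sides
    by (intro order_trans[OF triangle] add_mono mult_mono) (auto simp: norm_divide norm_mult)
  also have "\<dots> = 2 * (h / (2 * pi) * E) + 2 * (h / (2 * pi) * (W * (2 * pi / h) * (2 * \<delta>))) + 2 * (W * \<delta>)"
    by (simp add: algebra_simps)
  also have "h / (2 * pi) * E = 2 * exp (-2*pi*\<delta>/h) / (1 - exp (-2*pi*\<delta>/h)) * B / \<mu>"
    using assms(4) by (simp add: E_def)
  also have "h / (2 * pi) * (W * (2 * pi / h) * (2 * \<delta>)) = 2 * \<delta> * W"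
    using assms(4) by simp
  finally show ?thesis
    by (simp add: W_def algebra_simps)
qed

section \<open>The trapezoidal rule on the real line\<close>

lemma exp_neg_abs_integrable:
  fixes \<mu> :: real
  assumes "\<mu> > 0"
  shows "(\<lambda>x. exp (-\<mu> * \<bar>x\<bar>)) integrable_on UNIV"
proof -
  let ?f = "\<lambda>x::real. exp (-\<mu> * \<bar>x\<bar>)"
  have right: "?f integrable_on {0..}"
    using integrable_on_exp_minus_to_infinity[OF assms] by (subst integrable_cong) auto
  have der: "\<And>x. x \<in> {0..} \<Longrightarrow> (uminus has_real_derivative -1) (at x within {0..})"
    by (auto intro!: derivative_eq_intros)
  have "(\<lambda>x. \<bar>-1\<bar> * ?f (- x)) absolutely_integrable_on {0..} \<and>
      integral {0..} (\<lambda>x. \<bar>-1\<bar> * ?f (- x)) = integral {0..} ?f"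
    using right by (auto intro!: nonnegative_absolutely_integrable_1)
  then have "?f absolutely_integrable_on (uminus ` {0..})"
    using has_absolute_integral_change_of_variables_1'[of "{0..}" uminus "\<lambda>_. -1" ?f "integral {0..} ?f", OF _ der]
    by simp
  moreover have "uminus ` {0..} = {..(0::real)}"
    by (auto simp: image_iff intro!: exI[of _ "- _"])
  ultimately have left: "?f integrable_on {..0}"
    by (auto simp: absolutely_integrable_on_def)
  have "(?f has_integral (integral {..0} ?f + integral {0..} ?f)) ({..0} \<union> {0..})"
    using left right
    by (intro has_integral_Un integrable_integral) (auto intro: negligible_subset[OF negligible_sing[of 0]])
  moreover have "{..0} \<union> {0..} = (UNIV :: real set)"
    by auto
  ultimately show ?thesis
    by (auto simp: integrable_on_def)
qed

lemma absolutely_integrable_of_exp_decay: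
  fixes G :: "real \<Rightarrow> complex"
  assumes "continuous_on UNIV G" "\<mu> > 0" "\<And>x. cmod (G x) \<le> B * exp (-\<mu> * \<bar>x\<bar>)"
  shows "G absolutely_integrable_on UNIV"
  using assms continuous_imp_measurable_on_sets_lebesgue[OF assms(1)]
  by (intro measurable_bounded_by_integrable_imp_absolutely_integrable[where g = "\<lambda>x. B * exp (-\<mu> * \<bar>x\<bar>)"]
      integrable_on_mult_right exp_neg_abs_integrable) auto

lemma tendsto_integral_symmetric_interval:
  fixes G :: "real \<Rightarrow> complex"
  assumes G: "G absolutely_integrable_on UNIV" and X: "filterlim X at_top sequentially"
  shows "(\<lambda>n. integral {-X n..X n} G) \<longlonglongrightarrow> integral UNIV G"
proof -
  define g where "g = (\<lambda>n x. if x \<in> {-X n..X n} then G x else 0)"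
  have "(\<lambda>n. integral UNIV (g n)) \<longlonglongrightarrow> integral UNIV G"
  proof (rule dominated_convergence(2))
    show "g n integrable_on UNIV" for n
      unfolding g_def integrable_restrict_UNIV
      using G by (auto intro: integrable_on_subinterval simp: absolutely_integrable_on_def)
    show "(\<lambda>x. norm (G x)) integrable_on UNIV"
      using G by (simp add: absolutely_integrable_on_def)
    show "norm (g n x) \<le> norm (G x)" for n x
      by (simp add: g_def)
    show "(\<lambda>n. g n x) \<longlonglongrightarrow> G x" for x
    proof (rule tendsto_eventually)
      show "\<forall>\<^sub>F n in sequentially. g n x = G x"
        using filterlim_at_top[THEN iffD1, OF X, rule_format, of "\<bar>x\<bar>"]
        by eventually_elim (auto simp: g_def abs_le_iff)
    qed
  qed
  then show ?thesis
    unfolding g_def integral_restrict_UNIV .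
qed

text \<open>Rather than the infinite trapezoidal sum, the hypothesis compares its symmetric partial sums with a
  target \<open>S\<close>; this avoids having to prove summability.\<close>

lemma norm_integral_minus_le_at_height:
  fixes G :: "complex \<Rightarrow> complex" and S :: complex
  assumes holo: "G holomorphic_on {z. \<bar>Im z\<bar> < d}"
    and "0 < \<delta>" "\<delta> < d" "0 < h" "0 < \<mu>" "0 \<le> B"
    and bound: "\<And>z. \<bar>Im z\<bar> \<le> \<delta> \<Longrightarrow> cmod (G z) \<le> B * exp (-\<mu> * \<bar>Re z\<bar>)"
    and sums: "\<And>A::nat. A \<ge> A0 \<Longrightarrow> cmod (of_real h * (\<Sum>k=-int A..int A. G (of_real (of_int k * h))) - S) \<le> T"
  shows "cmod (integral UNIV (\<lambda>x. G (of_real x)) - S)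
           \<le> 4 * exp (-2*pi*\<delta>/h) / (1 - exp (-2*pi*\<delta>/h)) * B / \<mu> + T"
proof -
  define X where "X = (\<lambda>A::nat. (real A + 1/2) * h)"
  define J where "J = (\<lambda>A. integral {-X A..X A} (\<lambda>x. G (of_real x)))"
  define D where "D = 4 * exp (-2*pi*\<delta>/h) / (1 - exp (-2*pi*\<delta>/h)) * B / \<mu>"
  define I where "I = integral UNIV (\<lambda>x. G (of_real x))"
  have "continuous_on UNIV (\<lambda>x::real. G (of_real x))"
    using assms by (intro continuous_on_compose2[OF holomorphic_on_imp_continuous_on[OF holo]])
      (auto intro!: continuous_intros)
  then have "(\<lambda>x. G (of_real x)) absolutely_integrable_on UNIV"
    using bound[of "of_real _"] assms(2) by (intro absolutely_integrable_of_exp_decay[OF _ assms(5), where B = B]) auto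
  moreover have "filterlim X at_top sequentially"
    unfolding X_def using assms(4) by real_asymp
  ultimately have "J \<longlonglongrightarrow> I"
    unfolding I_def J_def by (rule tendsto_integral_symmetric_interval)
  moreover have "(\<lambda>A. exp (-\<mu> * X A)) \<longlonglongrightarrow> 0"
    unfolding X_def using assms(4,5) by real_asymp
  ultimately have "(\<lambda>A. cmod (I - J A) + D + 6 * \<delta> * B * exp (-\<mu> * X A) + T)
      \<longlonglongrightarrow> cmod (I - I) + D + 6 * \<delta> * B * 0 + T"
    by (intro tendsto_intros)
  moreover have "\<forall>\<^sub>F A in sequentially. cmod (I - S) \<le> cmod (I - J A) + D + 6 * \<delta> * B * exp (-\<mu> * X A) + T"
    unfolding eventually_sequentially
  proof (intro exI allI impI)
    fix A :: nat assume "A \<ge> A0"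
    define s where "s = of_real h * (\<Sum>k=-int A..int A. G (of_real (of_int k * h)))"
    have "cmod (s - J A) \<le> D + 6 * \<delta> * B * exp (-\<mu> * X A)"
      unfolding s_def D_def J_def
      using norm_trapezoid_sum_minus_integral_le[OF holo assms(2-6) bound, of "X A" A] by (simp add: X_def)
    moreover have "cmod (s - S) \<le> T"
      unfolding s_def by (rule sums[OF \<open>A \<ge> A0\<close>])
    moreover have "I - S = ((I - J A) - (s - J A)) + (s - S)"
      by simp
    ultimately show "cmod (I - S) \<le> cmod (I - J A) + D + 6 * \<delta> * B * exp (-\<mu> * X A) + T"
      using norm_triangle_ineq[of "(I - J A) - (s - J A)" "s - S"] norm_triangle_ineq4[of "I - J A" "s - J A"]
      by (smt (verit))
  qed
  ultimately have "cmod (I - S) \<le> cmod (I - I) + D + 6 * \<delta> * B * 0 + T"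
    by (rule tendsto_lowerbound) simp
  then show ?thesis
    by (simp add: I_def D_def)
qed

lemma norm_integral_minus_le_of_strip_decay:
  fixes G :: "complex \<Rightarrow> complex" and B :: "real \<Rightarrow> real" and S :: complex
  assumes holo: "G holomorphic_on {z. \<bar>Im z\<bar> < d}"
    and "0 < d" "0 < h" "0 < \<mu>"
    and bound: "\<And>\<delta> z. 0 < \<delta> \<Longrightarrow> \<delta> < d \<Longrightarrow> \<bar>Im z\<bar> \<le> \<delta> \<Longrightarrow> cmod (G z) \<le> B \<delta> * exp (-\<mu> * \<bar>Re z\<bar>)"
    and B_nonneg: "\<And>\<delta>. 0 < \<delta> \<Longrightarrow> \<delta> < d \<Longrightarrow> 0 \<le> B \<delta>"
    and B_cont: "(B \<longlongrightarrow> B d) (at_left d)"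
    and sums: "\<And>A::nat. A \<ge> A0 \<Longrightarrow> cmod (of_real h * (\<Sum>k=-int A..int A. G (of_real (of_int k * h))) - S) \<le> T"
  shows "cmod (integral UNIV (\<lambda>x. G (of_real x)) - S)
           \<le> 4 * exp (-2*pi*d/h) / (1 - exp (-2*pi*d/h)) * B d / \<mu> + T"
proof (rule tendsto_lowerbound)
  show "((\<lambda>\<delta>. 4 * exp (-2*pi*\<delta>/h) / (1 - exp (-2*pi*\<delta>/h)) * B \<delta> / \<mu> + T)
      \<longlongrightarrow> 4 * exp (-2*pi*d/h) / (1 - exp (-2*pi*d/h)) * B d / \<mu> + T) (at_left d)"
    using assms by (intro tendsto_intros B_cont) auto
  show "\<forall>\<^sub>F \<delta> in at_left d. cmod (integral UNIV (\<lambda>x. G (of_real x)) - S)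
      \<le> 4 * exp (-2*pi*\<delta>/h) / (1 - exp (-2*pi*\<delta>/h)) * B \<delta> / \<mu> + T"
    using eventually_at_left_real[OF \<open>0 < d\<close>]
  proof eventually_elim
    case (elim \<delta>)
    then show ?case
      using assms bound[of \<delta>] B_nonneg[of \<delta>]
      by (intro norm_integral_minus_le_at_height[OF holo _ _ _ _ _ _ sums]) auto
  qed
qed simp

lemma mult_sum_exp_tail_le:
  fixes c h :: real and m A :: int
  assumes "c > 0" "h > 0"
  shows "h * (\<Sum>j=m+1..A. exp (-c*j*h)) \<le> exp (-c*m*h) / c"
proof (cases "m \<le> A")
  case True
  have "h * (\<Sum>j=m+1..A. exp (-c*j*h)) \<le> exp (-c*m*h) / c - exp (-c*A*h) / c"
    using True
  proof (induction A rule: int_ge_induct)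
    case (step A)
    have "-c*A*h = -c*(A+1)*h + c*h"
      by (simp add: algebra_simps)
    then have shift: "exp (-c*A*h) = exp (c*h) * exp (-c*(A+1)*h)"
      by (simp add: mult.commute flip: exp_add)
    have "c*h \<le> exp (c*h) - 1"
      using exp_ge_add_one_self[of "c*h"] by linarith
    then have "c*h * exp (-c*(A+1)*h) \<le> (exp (c*h) - 1) * exp (-c*(A+1)*h)"
      by (rule mult_right_mono) simp
    then have last: "h * exp (-c*(A+1)*h) \<le> exp (-c*A*h) / c - exp (-c*(A+1)*h) / c"
      using assms unfolding shift by (simp add: field_simps)
    have "{m+1..A+1} = insert (A+1) {m+1..A}"
      using step.hyps by auto
    then have "h * (\<Sum>j=m+1..A+1. exp (-c*j*h)) = h * exp (-c*(A+1)*h) + h * (\<Sum>j=m+1..A. exp (-c*j*h))"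
      by (simp add: distrib_left algebra_simps)
    with last step.IH show ?case
      by linarith
  qed simp
  also have "\<dots> \<le> exp (-c*m*h) / c"
    using assms by simp
  finally show ?thesis .
qed (use assms in simp)

lemma norm_tail_sum_le:
  fixes g :: "int \<Rightarrow> complex" and c h K :: real and m A :: int
  assumes "h > 0" "c > 0" "K \<ge> 0"
    and bound: "\<And>j. j \<in> {m+1..A} \<Longrightarrow> cmod (g j) \<le> K * exp (-c*j*h)"
  shows "cmod (of_real h * (\<Sum>j=m+1..A. g j)) \<le> K * exp (-c*m*h) / c"
proof -
  have "cmod (of_real h * (\<Sum>j=m+1..A. g j)) \<le> h * (\<Sum>j=m+1..A. cmod (g j))"
    using assms(1) norm_sum[of g "{m+1..A}"] by (simp add: norm_mult)
  also have "\<dots> \<le> h * (\<Sum>j=m+1..A. K * exp (-c*j*h))"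
    using assms(1) bound by (intro mult_left_mono sum_mono) auto
  also have "\<dots> = K * (h * (\<Sum>j=m+1..A. exp (-c*j*h)))"
    by (simp add: sum_distrib_left algebra_simps)
  also have "\<dots> \<le> K * (exp (-c*m*h) / c)"
    using mult_sum_exp_tail_le[OF assms(2,1)] assms(3) by (rule mult_left_mono)
  finally show ?thesis
    by simp
qed

lemma norm_trapezoid_truncation_le:
  fixes F :: "complex \<Rightarrow> complex" and h \<alpha> \<beta> K\<^sub>\<alpha> K\<^sub>\<beta> :: real and M N A :: int
  assumes "h > 0" "\<alpha> > 0" "\<beta> > 0" "K\<^sub>\<alpha> \<ge> 0" "K\<^sub>\<beta> \<ge> 0"
    and MN: "0 \<le> M" "0 \<le> N" "M \<le> A" "N \<le> A"
    and left: "\<And>x. x < 0 \<Longrightarrow> cmod (F (of_real x)) \<le> K\<^sub>\<alpha> * exp (\<alpha> * x)"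
    and right: "\<And>x. x \<ge> 0 \<Longrightarrow> cmod (F (of_real x)) \<le> K\<^sub>\<beta> * exp (-\<beta> * x)"
  shows "cmod (of_real h * (\<Sum>k=-A..A. F (of_real (of_int k * h))) - of_real h * (\<Sum>k=-M..N. F (of_real (of_int k * h))))
         \<le> K\<^sub>\<alpha> * exp (-\<alpha>*M*h) / \<alpha> + K\<^sub>\<beta> * exp (-\<beta>*N*h) / \<beta>"
proof -
  define g where "g = (\<lambda>k::int. F (of_real (of_int k * h)))"
  have "{-A..A} = {-A..-M-1} \<union> ({-M..N} \<union> {N+1..A})"
    using MN by auto
  then have "(\<Sum>k=-A..A. g k) = (\<Sum>k=-A..-M-1. g k) + ((\<Sum>k=-M..N. g k) + (\<Sum>k=N+1..A. g k))"
    using MN by (simp only:) (subst sum.union_disjoint, auto)+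
  moreover have "(\<Sum>k=-A..-M-1. g k) = (\<Sum>j=M+1..A. g (-j))"
    by (rule sum.reindex_bij_witness[of _ uminus uminus]) auto
  ultimately have "of_real h * (\<Sum>k=-A..A. g k) - of_real h * (\<Sum>k=-M..N. g k)
      = of_real h * (\<Sum>j=M+1..A. g (-j)) + of_real h * (\<Sum>k=N+1..A. g k)"
    by (simp add: algebra_simps)
  then have "cmod (of_real h * (\<Sum>k=-A..A. g k) - of_real h * (\<Sum>k=-M..N. g k))
      \<le> cmod (of_real h * (\<Sum>j=M+1..A. g (-j))) + cmod (of_real h * (\<Sum>k=N+1..A. g k))"
    by (simp add: norm_triangle_ineq)
  also have "\<dots> \<le> K\<^sub>\<alpha> * exp (-\<alpha>*M*h) / \<alpha> + K\<^sub>\<beta> * exp (-\<beta>*N*h) / \<beta>"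
  proof (intro add_mono norm_tail_sum_le)
    fix j assume "j \<in> {M+1..A}"
    then show "cmod (g (-j)) \<le> K\<^sub>\<alpha> * exp (-\<alpha>*j*h)"
      using left[of "- (of_int j * h)"] MN assms(1) by (simp add: g_def mult.assoc)
  next
    fix j assume "j \<in> {N+1..A}"
    then show "cmod (g j) \<le> K\<^sub>\<beta> * exp (-\<beta>*j*h)"
      using right[of "of_int j * h"] MN assms(1) by (simp add: g_def mult.assoc)
  qed (use assms in auto)
  finally show ?thesis
    unfolding g_def .
qed

lemma norm_trapezoid_truncation_exp_le:
  fixes F :: "complex \<Rightarrow> complex" and c K h \<alpha> \<beta> s :: real and M N A :: int
  assumes "0 < h" "0 < \<alpha>" "0 < \<beta>" "1 \<le> c" "0 \<le> K"
    and "0 \<le> M" "0 \<le> N" "M \<le> A" "N \<le> A" "s \<le> \<alpha> * M * h" "s \<le> \<beta> * N * h"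
    and left: "\<And>x. x < 0 \<Longrightarrow> cmod (F (of_real x)) \<le> K * c powr \<alpha> * exp (\<alpha> * x)"
    and right: "\<And>x. x \<ge> 0 \<Longrightarrow> cmod (F (of_real x)) \<le> K * c powr \<beta> * exp (-\<beta> * x)"
  shows "cmod (of_real h * (\<Sum>k=-A..A. F (of_real (of_int k * h))) - of_real h * (\<Sum>k=-M..N. F (of_real (of_int k * h))))
         \<le> 2 * K * c powr max \<alpha> \<beta> * exp (-s) / min \<alpha> \<beta>"
proof -
  have tail: "K * c powr \<gamma> * exp (-\<gamma> * L * h) / \<gamma> \<le> K * c powr max \<alpha> \<beta> * exp (-s) / min \<alpha> \<beta>"
    if "\<gamma> \<in> {\<alpha>, \<beta>}" "s \<le> \<gamma> * L * h" for \<gamma> L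
  proof -
    have "K * c powr \<gamma> * exp (-\<gamma> * L * h) \<le> K * c powr max \<alpha> \<beta> * exp (-s)"
      using that assms(4,5) by (intro mult_mono mult_left_mono powr_mono) auto
    then show ?thesis
      using that assms(2-5) by (intro frac_le) auto
  qed
  have "cmod (of_real h * (\<Sum>k=-A..A. F (of_real (of_int k * h))) - of_real h * (\<Sum>k=-M..N. F (of_real (of_int k * h))))
      \<le> K * c powr \<alpha> * exp (-\<alpha>*M*h) / \<alpha> + K * c powr \<beta> * exp (-\<beta>*N*h) / \<beta>"
    using assms by (intro norm_trapezoid_truncation_le) auto
  also have "\<dots> \<le> 2 * K * c powr max \<alpha> \<beta> * exp (-s) / min \<alpha> \<beta>"
    using tail[of \<alpha> M] tail[of \<beta> N] assms(10,11) by (simp add: mult.assoc)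
  finally show ?thesis .
qed

lemma norm_le_min_max_decay:
  fixes F :: "complex \<Rightarrow> complex" and c K \<alpha> \<beta> :: real
  assumes "1 \<le> c" "0 \<le> K"
    and left: "Re z < 0 \<Longrightarrow> cmod (F z) \<le> K * c powr \<alpha> * exp (\<alpha> * Re z)"
    and right: "Re z \<ge> 0 \<Longrightarrow> cmod (F z) \<le> K * c powr \<beta> * exp (-\<beta> * Re z)"
  shows "cmod (F z) \<le> K * c powr max \<alpha> \<beta> * exp (- min \<alpha> \<beta> * \<bar>Re z\<bar>)"
proof -
  obtain \<gamma> where "\<gamma> \<in> {\<alpha>, \<beta>}" and F_le: "cmod (F z) \<le> K * c powr \<gamma> * exp (-\<gamma> * \<bar>Re z\<bar>)"
    using left right by (cases "Re z < 0") auto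
  then have "K * c powr \<gamma> * exp (-\<gamma> * \<bar>Re z\<bar>) \<le> K * c powr max \<alpha> \<beta> * exp (- min \<alpha> \<beta> * \<bar>Re z\<bar>)"
    using assms(1,2) by (intro mult_mono mult_left_mono powr_mono) (auto intro: mult_right_mono)
  with F_le show ?thesis
    by linarith
qed

lemma norm_integral_minus_trapezoid_le:
  fixes F :: "complex \<Rightarrow> complex" and K \<alpha> \<beta> h s :: real and M N :: int
  assumes holo: "F holomorphic_on {z. \<bar>Im z\<bar> < d}"
    and "0 < d" "d < pi/2" "0 \<le> K" "0 < \<alpha>" "0 < \<beta>" "0 < h"
    and left: "\<And>\<delta> z. 0 \<le> \<delta> \<Longrightarrow> \<delta> < d \<Longrightarrow> \<bar>Im z\<bar> \<le> \<delta> \<Longrightarrow> Re z < 0 \<Longrightarrow>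
                 cmod (F z) \<le> K * (2 / cos \<delta>) powr \<alpha> * exp (\<alpha> * Re z)"
    and right: "\<And>\<delta> z. 0 \<le> \<delta> \<Longrightarrow> \<delta> < d \<Longrightarrow> \<bar>Im z\<bar> \<le> \<delta> \<Longrightarrow> Re z \<ge> 0 \<Longrightarrow>
                 cmod (F z) \<le> K * (2 / cos \<delta>) powr \<beta> * exp (-\<beta> * Re z)"
    and "0 \<le> M" "0 \<le> N" "s = 2*pi*d/h" "s \<le> \<alpha>*M*h" "s \<le> \<beta>*N*h"
  shows "(\<lambda>x. F (of_real x)) absolutely_integrable_on UNIV"
    and "cmod (integral UNIV (\<lambda>x. F (of_real x)) - of_real h * (\<Sum>k=-M..N. F (of_real (of_int k * h))))
      \<le> 2 powr (max \<alpha> \<beta> + 1) * K / min \<alpha> \<beta> * (2 / ((1 - exp (-s)) * cos d powr max \<alpha> \<beta>) + 1) * exp (-s)"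
proof -
  define \<mu> \<nu> where "\<mu> = min \<alpha> \<beta>" and "\<nu> = max \<alpha> \<beta>"
  define B where "B = (\<lambda>\<delta>. K * (2 / cos \<delta>) powr \<nu>)"
  have "0 < \<mu>"
    using assms by (simp add: \<mu>_def)
  have cos_pos: "0 < cos \<delta>" if "0 \<le> \<delta>" "\<delta> \<le> d" for \<delta>
    using that assms by (intro cos_gt_zero_pi) auto
  have decay: "cmod (F z) \<le> B \<delta> * exp (-\<mu> * \<bar>Re z\<bar>)" if "0 \<le> \<delta>" "\<delta> < d" "\<bar>Im z\<bar> \<le> \<delta>" for \<delta> z
  proof -
    have "1 \<le> 2 / cos \<delta>"
      using cos_pos[of \<delta>] that by (simp add: le_divide_eq) (use cos_le_one[of \<delta>] in linarith)
    then show ?thesis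
      unfolding B_def \<mu>_def \<nu>_def using left[OF that] right[OF that] assms(4)
      by (intro norm_le_min_max_decay) auto
  qed
  have "continuous_on UNIV (\<lambda>x::real. F (of_real x))"
    using assms by (intro continuous_on_compose2[OF holomorphic_on_imp_continuous_on[OF holo]])
      (auto intro!: continuous_intros)
  then show "(\<lambda>x. F (of_real x)) absolutely_integrable_on UNIV"
    using decay[of 0 "of_real _"] assms(2)
    by (intro absolutely_integrable_of_exp_decay[OF _ \<open>0 < \<mu>\<close>, where B = "B 0"]) auto
  have sums: "cmod (of_real h * (\<Sum>k=-int A..int A. F (of_real (of_int k * h)))
      - of_real h * (\<Sum>k=-M..N. F (of_real (of_int k * h)))) \<le> 2 * K * 2 powr \<nu> * exp (-s) / \<mu>"
    if "A \<ge> nat (max M N)" for A :: nat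
    unfolding \<mu>_def \<nu>_def using that assms left[of 0 "of_real _"] right[of 0 "of_real _"]
    by (intro norm_trapezoid_truncation_exp_le) auto
  have "(B \<longlongrightarrow> B d) (at_left d)"
    unfolding B_def using cos_pos[of d] assms(2) by (intro tendsto_intros) auto
  then have "cmod (integral UNIV (\<lambda>x. F (of_real x)) - of_real h * (\<Sum>k=-M..N. F (of_real (of_int k * h))))
      \<le> 4 * exp (-2*pi*d/h) / (1 - exp (-2*pi*d/h)) * B d / \<mu> + 2 * K * 2 powr \<nu> * exp (-s) / \<mu>"
    using decay cos_pos assms(4)
    by (intro norm_integral_minus_le_of_strip_decay[OF holo assms(2,7) \<open>0 < \<mu>\<close> _ _ _ sums]) (auto simp: B_def)
  also have "\<dots> = 2 powr (\<nu> + 1) * K / \<mu> * (2 / ((1 - exp (-s)) * cos d powr \<nu>) + 1) * exp (-s)"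
  proof -
    have "0 < s"
      using assms by simp
    then have "1 - exp (-s) \<noteq> 0"
      by simp
    moreover have "exp (-2*pi*d/h) = exp (-s)"
      using assms(12) by simp
    ultimately show ?thesis
      using cos_pos[of d] assms(2) \<open>0 < \<mu>\<close> by (simp add: B_def powr_add powr_divide field_simps)
  qed
  finally show "cmod (integral UNIV (\<lambda>x. F (of_real x)) - of_real h * (\<Sum>k=-M..N. F (of_real (of_int k * h))))
      \<le> 2 powr (max \<alpha> \<beta> + 1) * K / min \<alpha> \<beta> * (2 / ((1 - exp (-s)) * cos d powr max \<alpha> \<beta>) + 1) * exp (-s)"
    by (simp add: \<mu>_def \<nu>_def)
qed

section \<open>The sinh substitution\<close>

lemma sinh_of_real: "sinh (complex_of_real x) = of_real (sinh x)"
  by (simp add: sinh_field_def sinh_def exp_of_real flip: exp_of_real)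

lemma cosh_of_real: "cosh (complex_of_real x) = of_real (cosh x)"
  by (simp add: cosh_field_def cosh_def flip: exp_of_real)

lemma Re_cosh_complex: "Re (cosh z) = cosh (Re z) * cos (Im z)"
  by (simp add: cosh_field_def Re_exp cosh_def field_simps)

lemma exp_abs_le_2_cosh: "exp \<bar>x\<bar> \<le> 2 * cosh (x::real)"
  by (cases "x \<ge> 0") (auto simp: cosh_def)

lemma exp_abs_Re_mult_cos_le_norm_cosh:
  fixes z :: complex
  assumes "\<bar>Im z\<bar> \<le> \<delta>" "\<delta> < pi/2"
  shows "exp \<bar>Re z\<bar> * cos \<delta> / 2 \<le> cmod (cosh z)"
proof -
  have "0 \<le> cos \<delta>" "cos \<delta> \<le> cos (Im z)"
    using assms cos_monotone_0_pi_le[of "\<bar>Im z\<bar>" \<delta>] by (auto intro!: cos_ge_zero)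
  then have "exp \<bar>Re z\<bar> / 2 * cos \<delta> \<le> cosh (Re z) * cos (Im z)"
    using exp_abs_le_2_cosh[of "Re z"] by (intro mult_mono) auto
  also have "\<dots> \<le> cmod (cosh z)"
    by (metis Re_cosh_complex abs_ge_self abs_Re_le_cmod order_trans)
  finally show ?thesis by simp
qed

lemma norm_f_sinh_mult_cosh_le:
  fixes f :: "complex \<Rightarrow> complex" and z :: complex
  assumes f_bound: "cmod (f (sinh z)) \<le> K * cmod (1 + (sinh z)^2) powr (-(\<gamma>+1)/2)"
    and "0 \<le> K" "0 \<le> \<gamma>" "\<bar>Im z\<bar> \<le> \<delta>" "\<delta> < pi/2"
  shows "cmod (f (sinh z) * cosh z) \<le> K * (2 / cos \<delta>) powr \<gamma> * exp (-\<gamma> * \<bar>Re z\<bar>)"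
proof -
  define r where "r = cmod (cosh z)"
  have cos_pos: "cos \<delta> > 0"
    using assms by (intro cos_gt_zero_pi) auto
  have r_ge: "exp \<bar>Re z\<bar> * cos \<delta> / 2 \<le> r"
    unfolding r_def by (rule exp_abs_Re_mult_cos_le_norm_cosh[OF assms(4,5)])
  then have r_pos: "r > 0"
    using cos_pos by (smt (verit) divide_pos_pos exp_gt_zero mult_pos_pos)
  have "1 + (sinh z)^2 = (cosh z)^2"
    by (simp add: cosh_square_eq)
  then have norm_eq: "cmod (1 + (sinh z)^2) = r powr 2"
    using r_pos by (simp add: r_def norm_power)
  have "cmod (1 + (sinh z)^2) powr (-(\<gamma>+1)/2) = r powr (-\<gamma> - 1)"
    unfolding norm_eq powr_powr by (intro arg_cong[where f="(powr) r"]) simp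
  also have "\<dots> = r powr (-\<gamma>) / r"
    using r_pos by (simp add: powr_diff)
  finally have f_le: "cmod (f (sinh z)) \<le> K * (r powr (-\<gamma>) / r)"
    using f_bound by simp
  have "cmod (f (sinh z) * cosh z) = cmod (f (sinh z)) * r"
    by (simp add: norm_mult r_def)
  also have "\<dots> \<le> K * (r powr (-\<gamma>) / r) * r"
    using f_le r_pos by (intro mult_right_mono) auto
  also have "\<dots> = K * r powr (-\<gamma>)"
    using r_pos by simp
  also have "r powr (-\<gamma>) \<le> (exp \<bar>Re z\<bar> * (cos \<delta> / 2)) powr (-\<gamma>)"
    using r_ge cos_pos assms(3) by (intro powr_mono2') auto
  also have "\<dots> = (2 / cos \<delta>) powr \<gamma> * exp (-\<gamma> * \<bar>Re z\<bar>)"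
    using cos_pos by (simp add: powr_mult exp_powr_real powr_minus_divide powr_divide exp_minus field_simps)
  finally show ?thesis
    using assms(2) by (simp add: mult_left_mono mult.assoc)
qed

lemma sinh_substitution_decay:
  fixes f :: "complex \<Rightarrow> complex" and K \<alpha> \<beta> :: real
  assumes "d < pi / 2" "f analytic_on (sinh ` strip d)" "0 \<le> K" "0 \<le> \<alpha>" "0 \<le> \<beta>"
    and f_minus: "\<And>z. z \<in> sinh ` strip_minus d \<Longrightarrow> cmod (f z) \<le> K * cmod (1 + z^2) powr (-(\<alpha> + 1) / 2)"
    and f_plus: "\<And>z. z \<in> sinh ` strip_plus d \<Longrightarrow> cmod (f z) \<le> K * cmod (1 + z^2) powr (-(\<beta> + 1) / 2)"
  shows "(\<lambda>z. f (sinh z) * cosh z) holomorphic_on {z. \<bar>Im z\<bar> < d}"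
    and "\<And>\<delta> z. 0 \<le> \<delta> \<Longrightarrow> \<delta> < d \<Longrightarrow> \<bar>Im z\<bar> \<le> \<delta> \<Longrightarrow> Re z < 0 \<Longrightarrow>
           cmod (f (sinh z) * cosh z) \<le> K * (2 / cos \<delta>) powr \<alpha> * exp (\<alpha> * Re z)"
    and "\<And>\<delta> z. 0 \<le> \<delta> \<Longrightarrow> \<delta> < d \<Longrightarrow> \<bar>Im z\<bar> \<le> \<delta> \<Longrightarrow> Re z \<ge> 0 \<Longrightarrow>
           cmod (f (sinh z) * cosh z) \<le> K * (2 / cos \<delta>) powr \<beta> * exp (-\<beta> * Re z)"
proof -
  have "(\<lambda>z. f (sinh z)) analytic_on strip d"
    using analytic_on_compose_gen[OF analytic_on_sinh[OF analytic_on_ident] assms(2)] by (simp add: o_def)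
  then show "(\<lambda>z. f (sinh z) * cosh z) holomorphic_on {z. \<bar>Im z\<bar> < d}"
    unfolding strip_def by (intro analytic_imp_holomorphic analytic_intros)
  fix \<delta> z assume \<delta>: "0 \<le> \<delta>" "\<delta> < d" "\<bar>Im z\<bar> \<le> \<delta>"
  show "cmod (f (sinh z) * cosh z) \<le> K * (2 / cos \<delta>) powr \<alpha> * exp (\<alpha> * Re z)" if "Re z < 0"
    using that \<delta> assms(1,3,4) f_minus[of "sinh z"]
    by (auto intro!: norm_f_sinh_mult_cosh_le[THEN order_trans] simp: strip_minus_def strip_def)
  show "cmod (f (sinh z) * cosh z) \<le> K * (2 / cos \<delta>) powr \<beta> * exp (-\<beta> * Re z)" if "Re z \<ge> 0"
    using that \<delta> assms(1,3,5) f_plus[of "sinh z"]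
    by (auto intro!: norm_f_sinh_mult_cosh_le[THEN order_trans] simp: strip_plus_def strip_def)
qed

lemma integral_sinh_substitution:
  fixes f :: "complex \<Rightarrow> complex"
  assumes "(\<lambda>x. f (of_real (sinh x)) * of_real (cosh x)) absolutely_integrable_on UNIV"
  shows "integral UNIV (\<lambda>t. f (of_real t)) = integral UNIV (\<lambda>x. f (of_real (sinh x)) * of_real (cosh x))"
proof -
  define F where "F = (\<lambda>x. f (of_real (sinh x)) * complex_of_real (cosh x))"
  define I where "I = integral UNIV F"
  have "(F has_integral I) UNIV"
    using assms unfolding F_def I_def absolutely_integrable_on_def by (auto intro: integrable_integral)
  have sinh_surj: "sinh ` (UNIV::real set) = UNIV"
    by (auto simp: image_iff intro!: exI[of _ "arsinh _"])
  have "((\<lambda>t. f (of_real t) \<bullet> b) has_integral (I \<bullet> b)) UNIV" if b: "b \<in> Basis" for b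
  proof -
    have F_b: "F x \<bullet> b = \<bar>cosh x\<bar> * (f (of_real (sinh x)) \<bullet> b)" for x
      by (simp add: F_def scaleR_conv_of_real mult.commute flip: scaleR_conv_of_real)
    have "(\<lambda>x. F x \<bullet> b) absolutely_integrable_on UNIV" "integral UNIV (\<lambda>x. F x \<bullet> b) = I \<bullet> b"
      using assms \<open>(F has_integral I) UNIV\<close> b absolutely_integrable_componentwise_iff[where f = F and A = UNIV]
        has_integral_componentwise_iff[where f = F and y = I and A = UNIV] integral_unique
      unfolding F_def by blast+
    moreover have "\<And>x. x \<in> UNIV \<Longrightarrow> (sinh has_real_derivative cosh x) (at x within UNIV)"
      by (auto intro!: derivative_eq_intros)
    ultimately have "(\<lambda>t. f (of_real t) \<bullet> b) absolutely_integrable_on (sinh ` UNIV) \<and>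
        integral (sinh ` UNIV) (\<lambda>t. f (of_real t) \<bullet> b) = I \<bullet> b"
      using has_absolute_integral_change_of_variables_1'[of UNIV sinh cosh "\<lambda>t. f (of_real t) \<bullet> b" "I \<bullet> b"]
      unfolding F_b by (simp add: inj_on_def)
    then show ?thesis
      unfolding sinh_surj by (metis absolutely_integrable_on_def integrable_integral)
  qed
  then have "((\<lambda>t. f (of_real t)) has_integral I) UNIV"
    by (subst has_integral_componentwise_iff) blast
  then show ?thesis
    unfolding I_def F_def by (rule integral_unique)
qed

lemma norm_integral_minus_sinh_trapezoid_le:
  fixes f :: "complex \<Rightarrow> complex" and d K \<alpha> \<beta> h s :: real and M N :: int
  assumes "0 < d" "d < pi / 2" "f analytic_on (sinh ` strip d)" "0 \<le> K" "0 < \<alpha>" "0 < \<beta>"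
    and "\<And>z. z \<in> sinh ` strip_minus d \<Longrightarrow> cmod (f z) \<le> K * cmod (1 + z^2) powr (-(\<alpha> + 1) / 2)"
    and "\<And>z. z \<in> sinh ` strip_plus d \<Longrightarrow> cmod (f z) \<le> K * cmod (1 + z^2) powr (-(\<beta> + 1) / 2)"
    and "0 < h" "0 \<le> M" "0 \<le> N" "s = 2 * pi * d / h" "s \<le> \<alpha> * M * h" "s \<le> \<beta> * N * h"
  shows "cmod (integral UNIV (\<lambda>t. f (of_real t))
           - of_real h * (\<Sum>k=-M..N. f (sinh (of_real (of_int k * h))) * cosh (of_real (of_int k * h))))
         \<le> 2 powr (max \<alpha> \<beta> + 1) * K / min \<alpha> \<beta> * (2 / ((1 - exp (-s)) * cos d powr max \<alpha> \<beta>) + 1) * exp (-s)"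
proof -
  note decay = sinh_substitution_decay[OF assms(2-4) less_imp_le[OF assms(5)] less_imp_le[OF assms(6)] assms(7,8)]
  note trapezoid = norm_integral_minus_trapezoid_le[OF decay(1) assms(1,2,4-6,9) decay(2,3) assms(10-14)]
  have "integral UNIV (\<lambda>t. f (of_real t)) = integral UNIV (\<lambda>x. f (sinh (of_real x)) * cosh (of_real x))"
    using integral_sinh_substitution[of f] trapezoid(1) by (simp add: sinh_of_real cosh_of_real)
  then show ?thesis
    using trapezoid(2) by simp
qed

lemma sqrt_step_size:
  fixes a m :: real
  assumes "0 < a" "0 < m"
  shows "a / sqrt (a / m) = sqrt (a * m)" and "m * sqrt (a / m) = sqrt (a * m)"
proof -
  have "a = sqrt a * sqrt a" "m = sqrt m * sqrt m"
    using assms by simp_all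
  then show "a / sqrt (a / m) = sqrt (a * m)" "m * sqrt (a / m) = sqrt (a * m)"
    using assms by (simp_all add: real_sqrt_divide real_sqrt_mult field_simps)
qed

lemma balanced_truncation_bounds:
  fixes \<alpha> \<beta> :: real and n :: nat
  assumes "0 < \<alpha>" "0 < \<beta>"
  defines "M \<equiv> if min \<alpha> \<beta> = \<alpha> then int n else \<lceil>\<beta> * real n / \<alpha>\<rceil>"
    and "N \<equiv> if min \<alpha> \<beta> = \<alpha> then \<lceil>\<alpha> * real n / \<beta>\<rceil> else int n"
  shows "0 \<le> M" "0 \<le> N" "min \<alpha> \<beta> * real n \<le> \<alpha> * M" "min \<alpha> \<beta> * real n \<le> \<beta> * N"
proof -
  have "\<beta> * real n \<le> \<alpha> * \<lceil>\<beta> * real n / \<alpha>\<rceil>"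
    using le_of_int_ceiling[of "\<beta> * real n / \<alpha>"] unfolding pos_divide_le_eq[OF assms(1)]
    by (simp add: mult.commute)
  moreover have "\<alpha> * real n \<le> \<beta> * \<lceil>\<alpha> * real n / \<beta>\<rceil>"
    using le_of_int_ceiling[of "\<alpha> * real n / \<beta>"] unfolding pos_divide_le_eq[OF assms(2)]
    by (simp add: mult.commute)
  moreover have "0 \<le> \<beta> * real n / \<alpha>" "0 \<le> \<alpha> * real n / \<beta>"
    using assms(1,2) by simp_all
  ultimately show "0 \<le> M" "0 \<le> N" "min \<alpha> \<beta> * real n \<le> \<alpha> * M" "min \<alpha> \<beta> * real n \<le> \<beta> * N"
    by (auto simp: M_def N_def min_def)
qed

lemma step_size_and_truncation:
  fixes d \<alpha> \<beta> :: real and n :: nat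
  assumes "0 < d" "0 < \<alpha>" "0 < \<beta>" "0 < n"
  defines "\<mu> \<equiv> min \<alpha> \<beta>"
  defines "h \<equiv> sqrt (2 * pi * d / (\<mu> * real n))" and "s \<equiv> sqrt (2 * pi * d * \<mu> * real n)"
    and "M \<equiv> if \<mu> = \<alpha> then int n else \<lceil>\<beta> * real n / \<alpha>\<rceil>"
    and "N \<equiv> if \<mu> = \<alpha> then \<lceil>\<alpha> * real n / \<beta>\<rceil> else int n"
  shows "0 < h" "s = 2 * pi * d / h" "0 \<le> M" "0 \<le> N" "s \<le> \<alpha> * M * h" "s \<le> \<beta> * N * h"
proof -
  have "0 < \<mu> * real n"
    using assms by (simp add: \<mu>_def)
  then show "0 < h" and s: "s = 2 * pi * d / h"
    using sqrt_step_size(1)[of "2 * pi * d" "\<mu> * real n"] assms(1) by (simp_all add: h_def s_def mult.assoc)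
  have "\<mu> * real n * h = s"
    using sqrt_step_size(2)[of "2 * pi * d" "\<mu> * real n"] \<open>0 < \<mu> * real n\<close> assms(1)
    by (simp add: h_def s_def mult.assoc)
  moreover have "0 \<le> M" "0 \<le> N" "\<mu> * real n \<le> \<alpha> * M" "\<mu> * real n \<le> \<beta> * N"
    using balanced_truncation_bounds[OF assms(2,3), of n] by (simp_all add: M_def N_def \<mu>_def)
  ultimately show "0 \<le> M" "0 \<le> N" "s \<le> \<alpha> * M * h" "s \<le> \<beta> * N * h"
    using \<open>0 < h\<close> by (metis mult_right_mono less_imp_le)+
qed

lemma error_constant_antimono:
  fixes c b s s' :: real
  assumes "0 < s'" "s' \<le> s" "0 \<le> c" "0 < b"
  shows "c * (2 / ((1 - exp (-s)) * b) + 1) \<le> c * (2 / ((1 - exp (-s')) * b) + 1)"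
proof -
  have "0 < 1 - exp (-s')" "1 - exp (-s') \<le> 1 - exp (-s)"
    using assms(1,2) by simp_all
  then show ?thesis
    using assms(3,4) by (intro mult_left_mono add_right_mono divide_left_mono mult_right_mono) auto
qed

theorem theorem3:
  fixes f :: "complex \<Rightarrow> complex"
    and d K \<alpha> \<beta> :: real and n :: nat
  assumes "0 < d" "d < pi / 2"
    and "f analytic_on (sinh ` strip d)"
    and "0 < K" "0 < \<alpha>" "0 < \<beta>"
    and "\<And>z. z \<in> sinh ` strip_minus d \<Longrightarrow>
           cmod (f z) \<le> K * cmod (1 + z^2) powr (-(\<alpha> + 1) / 2)"
    and "\<And>z. z \<in> sinh ` strip_plus d \<Longrightarrow>
           cmod (f z) \<le> K * cmod (1 + z^2) powr (-(\<beta> + 1) / 2)"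
    and "0 < n"
  shows
    "let \<mu> = min \<alpha> \<beta>; \<nu> = max \<alpha> \<beta>;
         h = sqrt (2 * pi * d / (\<mu> * real n));
         M = (if \<mu> = \<alpha> then int n else \<lceil>\<beta> * real n / \<alpha>\<rceil>);
         N = (if \<mu> = \<alpha> then \<lceil>\<alpha> * real n / \<beta>\<rceil> else int n);
         C\<^sub>1 = 2 powr (\<nu> + 1) * K / \<mu> *
               (2 / ((1 - exp (- sqrt (2 * pi * d * \<mu>))) * cos d powr \<nu>) + 1)
     in cmod (integral UNIV (\<lambda>t::real. f (complex_of_real t))
              - complex_of_real h * (\<Sum>k = -M..N.
                  f (sinh (complex_of_real (real_of_int k * h))) * cosh (complex_of_real (real_of_int k * h))))
        \<le> C\<^sub>1 * exp (- sqrt (2 * pi * d * \<mu> * real n))"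
proof -
  define \<mu> \<nu> where "\<mu> = min \<alpha> \<beta>" and "\<nu> = max \<alpha> \<beta>"
  define h where "h = sqrt (2 * pi * d / (\<mu> * real n))"
  define M N where "M = (if \<mu> = \<alpha> then int n else \<lceil>\<beta> * real n / \<alpha>\<rceil>)"
    and "N = (if \<mu> = \<alpha> then \<lceil>\<alpha> * real n / \<beta>\<rceil> else int n)"
  define s where "s = sqrt (2 * pi * d * \<mu> * real n)"
  note params = step_size_and_truncation[OF assms(1,5,6,9), folded \<mu>_def, folded h_def s_def M_def N_def]
  have "cmod (integral UNIV (\<lambda>t. f (of_real t))
        - of_real h * (\<Sum>k=-M..N. f (sinh (of_real (of_int k * h))) * cosh (of_real (of_int k * h))))
      \<le> 2 powr (\<nu> + 1) * K / \<mu> * (2 / ((1 - exp (-s)) * cos d powr \<nu>) + 1) * exp (-s)"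
    using norm_integral_minus_sinh_trapezoid_le[OF assms(1-3) _ assms(5-8) params(1,3,4,2,5,6)] assms(4)
    unfolding \<mu>_def \<nu>_def by simp
  also have "\<dots> \<le> 2 powr (\<nu> + 1) * K / \<mu> * (2 / ((1 - exp (- sqrt (2 * pi * d * \<mu>))) * cos d powr \<nu>) + 1)
      * exp (-s)"
    using assms cos_gt_zero_pi[of d]
    by (intro mult_right_mono error_constant_antimono) (simp_all add: s_def \<mu>_def)
  finally show ?thesis
    unfolding Let_def \<mu>_def[symmetric] \<nu>_def[symmetric] h_def[symmetric] M_def[symmetric] N_def[symmetric]
      s_def[symmetric] .
qed

end
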